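(* Consider the closed compartmental model of a balanced mass action reaction network with diffusion, $$\dot X=-\big(( *_0)^{-1}\otimes I_m\big)(\mathbf{d}\otimes I_m)^{\mathrm{T}}( *_1\otimes I_m)R_d(X)(\mathbf{d}\otimes I_m)\frac{X}{X^*}+F(X),$$ with all objects as described in the context, and assume the global persistency property: for every $X_0\in\mathbb{R}_+^{mN}$ the solution with $X(0)=X_0$ satisfies $\liminf_{t\to\infty}X(t)>0$ (componentwise). Then for every initial condition $X(0)\in\mathbb{R}_+^{mN}$, as $t\to\infty$ the compartment concentrations $x^1(t),\dots,x^N(t)$ converge to the set of configurations with $x^1=\cdots=x^N\in\mathcal{E}$, where $\mathcal{E}=\{x^{**}\in\mathbb{R}_+^m: S^{\mathrm{T}}\mathrm{Ln}(x^{**})=S^{\mathrm{T}}\mathrm{Ln}(x^* )\}$ and $S=ZB$.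
   Context: Reaction network: $m$ species, $c$ complexes, $r$ reactions; $Z$ is the $m\times c$ complex stoichiometric matrix (nonnegative integer entries, column $\rho$ gives the species composition of complex $\rho$); $B$ is the $c\times r$ incidence matrix of the directed complex graph; $S=ZB$ is the stoichiometric matrix; $x^*\in\mathbb{R}_+^m$ (all entries strictly positive) is a thermodynamic equilibrium and $\mathcal{K}(x^* )=\mathrm{diag}(\kappa_1,\dots,\kappa_r)$ with all $\kappa_j>0$ (balanced reaction constants). The reaction vector field is $f(x)=-ZB\mathcal{K}(x^* )B^{\mathrm{T}}\mathrm{Exp}\big(Z^{\mathrm{T}}\mathrm{Ln}(x/x^* )\big)$, where $\mathrm{Ln}$, $\mathrm{Exp}$ act componentwise and $x/x^*$ is the componentwise quotient. Spatial discretization: a simplicial triangulation $K$ of a connected spatial domain, with $N$ vertices (compartments) and $N_e$ edges, whose 1-skeleton is a connected graph; $\mathbf{d}$ is the $N_e\times N$ transpose of the oriented vertex-edge incidence matrix of the 1-skeleton; $*_0$ is an $N\times N$ positive diagonal matrix (volumes of the dual cells of the vertices) and $*_1$ an $N_e\times N_e$ positive diagonal matrix. $X=((x^1)^{\mathrm{T}},\dots,(x^N)^{\mathrm{T}})^{\mathrm{T}}\in\mathbb{R}^{mN}$ with $x^j$ the concentrations in compartment $j$, $X^*=((x^* )^{\mathrm{T}},\dots,(x^* )^{\mathrm{T}})^{\mathrm{T}}$, $X/X^*$ the componentwise quotient, $F(X)=(f(x^1)^{\mathrm{T}},\dots,f(x^N)^{\mathrm{T}})^{\mathrm{T}}$.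 $R_d(X)$ is an $mN_e\times mN_e$ diagonal matrix with $R_d(X)\ge\alpha I$ for some $\alpha>0$, depending continuously differentiably on $X$. $\otimes$ is the Kronecker product, $I_m$ the $m\times m$ identity, $\mathbb{R}_+^{k}$ the vectors with all entries strictly positive. *)

theory Defs
  imports "HOL-Analysis.Analysis"
begin

text \<open>Vectors in R^k are modelled as real^'k for a finite index type 'k.
  Species: 'm, complexes: 'c, reactions: 'r, vertices (compartments): 'n, edges: 'e.\<close>

definition vln :: "real^'a \<Rightarrow> real^'a" where
  "vln x = (\<chi> i. ln (x$i))"

definition vexp :: "real^'a \<Rightarrow> real^'a" where
  "vexp x = (\<chi> i. exp (x$i))"

definition vdiv :: "real^'a \<Rightarrow> real^'a \<Rightarrow> real^'a" where
  "vdiv x y = (\<chi> i. x$i / y$i)"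

definition diag_mat :: "real^'a \<Rightarrow> real^'a^'a" where
  "diag_mat k = (\<chi> i j. if i = j then k$i else 0)"

definition is_diagonal :: "real^'a^'a \<Rightarrow> bool" where
  "is_diagonal A \<longleftrightarrow> (\<forall>i j. i \<noteq> j \<longrightarrow> A$i$j = 0)"

definition positive_diagonal :: "real^'a^'a \<Rightarrow> bool" where
  "positive_diagonal A \<longleftrightarrow> is_diagonal A \<and> (\<forall>i. A$i$i > 0)"

text \<open>Action of the Kronecker product (A \<otimes> I_m) on a stacked block vector
  Y = (Y^1,...,Y^k) with blocks Y^b in real^'m: block a of the result is
  sum_b A_ab Y^b.\<close>
definition kron_I :: "real^'b^'a \<Rightarrow> (real^'m)^'b \<Rightarrow> (real^'m)^'a" where
  "kron_I A Y = (\<chi> a. \<Sum>b\<in>UNIV. A$a$b *\<^sub>R Y$b)"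

text \<open>Action of an mN_e x mN_e diagonal matrix, given by its diagonal D.\<close>
definition diag_apply :: "(real^'m)^'e \<Rightarrow> (real^'m)^'e \<Rightarrow> (real^'m)^'e" where
  "diag_apply D Y = (\<chi> e. \<chi> i. D$e$i * Y$e$i)"

text \<open>B (c x r) is the incidence matrix of a directed graph: column j has -1 at the
  reactant complex, +1 at the product complex, 0 elsewhere.\<close>
definition is_incidence_matrix :: "real^'r^'c \<Rightarrow> bool" where
  "is_incidence_matrix B \<longleftrightarrow>
     (\<forall>j. \<exists>a b. a \<noteq> b \<and> (\<forall>\<rho>. B$\<rho>$j = (if \<rho> = b then 1 else if \<rho> = a then -1 else 0)))"

text \<open>d (N_e x N) is the transpose of the oriented vertex-edge incidence matrix of a
  simple connected graph (the 1-skeleton of the triangulation).\<close>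
definition is_connected_skeleton_d :: "real^'n^'e \<Rightarrow> bool" where
  "is_connected_skeleton_d d \<longleftrightarrow>
     (\<forall>e. \<exists>u v. u \<noteq> v \<and> (\<forall>w. d$e$w = (if w = v then 1 else if w = u then -1 else 0)))
   \<and> (\<forall>e e'. e \<noteq> e' \<longrightarrow> \<not> (\<forall>w. d$e$w \<noteq> 0 \<longleftrightarrow> d$e'$w \<noteq> 0))
   \<and> (\<forall>u v. (\<lambda>a b. \<exists>e. d$e$a \<noteq> 0 \<and> d$e$b \<noteq> 0)\<^sup>*\<^sup>* u v)"

definition reaction_field ::
  "real^'c^'m \<Rightarrow> real^'r^'c \<Rightarrow> real^'r \<Rightarrow> real^'m \<Rightarrow> real^'m \<Rightarrow> real^'m" where
  "reaction_field Z B \<kappa> xs x =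
     - (Z *v (B *v (diag_mat \<kappa> *v (transpose B *v vexp (transpose Z *v vln (vdiv x xs))))))"

definition block_div :: "(real^'m)^'n \<Rightarrow> real^'m \<Rightarrow> (real^'m)^'n" where
  "block_div X xs = (\<chi> j. vdiv (X$j) xs)"

definition compartmental_rhs ::
  "real^'c^'m \<Rightarrow> real^'r^'c \<Rightarrow> real^'r \<Rightarrow> real^'m \<Rightarrow> real^'n^'e \<Rightarrow> real^'n^'n \<Rightarrow> real^'e^'e
   \<Rightarrow> ((real^'m)^'n \<Rightarrow> (real^'m)^'e) \<Rightarrow> (real^'m)^'n \<Rightarrow> (real^'m)^'n" where
  "compartmental_rhs Z B \<kappa> xs d s0 s1 Rd X =
     - kron_I (matrix_inv s0) (kron_I (transpose d) (kron_I s1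
         (diag_apply (Rd X) (kron_I d (block_div X xs)))))
     + (\<chi> j. reaction_field Z B \<kappa> xs (X$j))"

definition pos_orthant :: "((real^'m)^'n) set" where
  "pos_orthant = {X. \<forall>j i. X$j$i > 0}"

definition is_solution :: "((real^'m)^'n \<Rightarrow> (real^'m)^'n) \<Rightarrow> (real \<Rightarrow> (real^'m)^'n) \<Rightarrow> bool" where
  "is_solution G X \<longleftrightarrow>
     (\<forall>t\<ge>0. X t \<in> pos_orthant \<and> (X has_vector_derivative G (X t)) (at t within {0..}))"

end

theory Submission
  imports Defs
begin

text \<open>The relative entropy V(X) = \<Sum>_j (*0)_jj \<Sum>_i (X^j_i ln (X^j_i / x*_i) - X^j_i + x*_i)
  is a Lyapunov function. Along solutions its derivative is -W, where the dissipation W is the sum of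
  a diffusion part, a positive combination of (ln y_v - ln y_u)(y_v - y_u) over the edges uv of the
  skeleton (with y = X/X*), and a reaction part, a positive combination of
  (u_b - u_a)(exp u_b - exp u_a) over the reactions a \<rightarrow> b (with u = Z^T Ln(x^j/x*)).
  By monotonicity of ln and exp both parts are nonnegative; W vanishes only if y is constant along
  every edge, hence (the skeleton being connected) on all compartments, and if moreover
  S^T Ln(x/x*) = 0. Sublevel sets of V bound the solution from above and persistence bounds it away
  from zero, so it eventually stays in a compact subset of the positive orthant. There a LaSalle-type
  argument applies: while the solution is far from the zero set of W it loses a fixed amount of V
  in a fixed time, which can happen only finitely often.\<close>

lemma kron_I_nth: "kron_I A Y $ a $ i = (\<Sum>b\<in>UNIV. A$a$b * Y$b$i)"
  by (simp add: kron_I_def sum_component)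

lemma block_div_nth: "block_div X xs $ j $ i = X$j$i / xs$i"
  by (simp add: block_div_def vdiv_def)

lemma kron_I_diag_mat_nth: "kron_I (diag_mat k) Y $ a $ i = k$a * Y$a$i"
  by (simp add: kron_I_nth diag_mat_def mult_delta_left)

lemma diag_mat_mv: "diag_mat k *v w = k * w"
  by (simp add: vec_eq_iff matrix_vector_mult_def diag_mat_def mult_delta_left)

lemma diag_mat_mult: "diag_mat a ** diag_mat b = diag_mat (a * b)"
  unfolding vec_eq_iff matrix_matrix_mult_def diag_mat_def by (auto simp: mult_delta_left mult_delta_right)

lemma diag_mat_1: "diag_mat 1 = mat 1"
  by (simp add: vec_eq_iff diag_mat_def mat_def)

lemma positive_diagonal_eq_diag_mat:
  "positive_diagonal A \<Longrightarrow> A = diag_mat (\<chi> i. A$i$i)"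
  by (auto simp: vec_eq_iff diag_mat_def positive_diagonal_def is_diagonal_def)

lemma matrix_inv_eqI:
  fixes A :: "'a::semiring_1^'n::finite^'n"
  assumes "A ** A' = mat 1" "A' ** A = mat 1"
  shows "matrix_inv A = A'"
proof -
  have inv: "A ** matrix_inv A = mat 1 \<and> matrix_inv A ** A = mat 1"
    unfolding matrix_inv_def by (rule someI[of _ A']) (use assms in blast)
  have "matrix_inv A = (A' ** A) ** matrix_inv A" by (simp add: assms)
  also have "\<dots> = A'" using inv by (simp add: matrix_mul_assoc[symmetric])
  finally show ?thesis .
qed

lemma matrix_inv_diag_mat:
  fixes k :: "real^'n::finite"
  assumes "\<forall>i. k$i \<noteq> 0"
  shows "matrix_inv (diag_mat k) = diag_mat (\<chi> i. inverse (k$i))"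
proof -
  have "k * (\<chi> i. inverse (k$i)) = 1" using assms by (simp add: vec_eq_iff)
  then show ?thesis by (intro matrix_inv_eqI) (simp_all add: diag_mat_mult diag_mat_1 mult.commute)
qed

lemma kron_I_matrix_inv_nth:
  assumes "positive_diagonal A"
  shows "kron_I (matrix_inv A) Y $ a $ i = Y$a$i / A$a$a"
proof -
  have "\<forall>i. A$i$i \<noteq> 0" using assms by (simp add: positive_diagonal_def less_imp_neq[symmetric])
  then show ?thesis
    by (subst positive_diagonal_eq_diag_mat[OF assms])
       (simp add: matrix_inv_diag_mat kron_I_diag_mat_nth divide_inverse mult.commute)
qed

lemma kron_I_positive_diagonal_nth:
  assumes "positive_diagonal A"
  shows "kron_I A Y $ a $ i = A$a$a * Y$a$i"
  by (subst positive_diagonal_eq_diag_mat[OF assms]) (simp add: kron_I_diag_mat_nth)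

lemma sum_signed_pair:
  fixes c :: "'a::finite \<Rightarrow> real"
  assumes "u \<noteq> v" "\<forall>w. c w = (if w = v then 1 else if w = u then -1 else 0)"
  shows "(\<Sum>w\<in>UNIV. c w * a w) = a v - a u"
proof -
  have "(\<Sum>w\<in>UNIV. c w * a w) = (\<Sum>w\<in>UNIV. (if w = v then a v else 0) - (if w = u then a u else 0))"
    by (rule sum.cong) (use assms in auto)
  then show ?thesis by (simp add: sum_subtractf)
qed

section \<open>Products of differences under monotone maps\<close>

lemma strict_mono_on_diff_mult_nonneg:
  fixes f :: "'a::linordered_idom \<Rightarrow> 'a"
  assumes "strict_mono_on S f" "a \<in> S" "b \<in> S"
  shows "0 \<le> (f a - f b) * (a - b)"
proof (cases a b rule: linorder_cases)
  case less
  then have "f a < f b" using assms strict_mono_onD by blast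
  then show ?thesis using less by (simp add: mult_nonpos_nonpos)
next
  case greater
  then have "f b < f a" using assms strict_mono_onD by blast
  then show ?thesis using greater by simp
qed simp

lemma strict_mono_on_diff_mult_eq_0_iff:
  fixes f :: "'a::linordered_idom \<Rightarrow> 'a"
  assumes "strict_mono_on S f" "a \<in> S" "b \<in> S"
  shows "(f a - f b) * (a - b) = 0 \<longleftrightarrow> a = b"
  using assms strict_mono_on_eqD[OF assms(1)] by auto

lemma strict_mono_on_ln: "strict_mono_on {0<..} (ln :: real \<Rightarrow> real)"
  by (rule strict_mono_onI) simp

lemma strict_mono_exp: "strict_mono (exp :: real \<Rightarrow> real)"
  by (auto intro: strict_monoI)

section \<open>The relative entropy and its dissipation\<close>

definition rel_entropy :: "real \<Rightarrow> real \<Rightarrow> real" where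
  "rel_entropy x c = x * ln (x / c) - x + c"

lemma rel_entropy_nonneg:
  assumes "x > 0" "c > 0"
  shows "0 \<le> rel_entropy x c"
proof -
  have "ln (c / x) \<le> c / x - 1" using assms by (intro ln_le_minus_one) simp
  then have "x * (1 - c / x) \<le> x * ln (x / c)"
    using assms by (intro mult_left_mono) (auto simp: ln_div)
  then show ?thesis using assms by (simp add: rel_entropy_def algebra_simps)
qed

lemma le_rel_entropy:
  assumes "x > 0" "c > 0"
  shows "x \<le> exp 2 * c + rel_entropy x c"
proof (cases "x \<le> exp 2 * c")
  case True
  then show ?thesis using rel_entropy_nonneg[OF assms] by simp
next
  case False
  then have "2 \<le> ln (x / c)" using assms by (simp add: ln_ge_iff field_simps)
  then have "x * 2 \<le> x * ln (x / c)" using assms by (intro mult_left_mono) auto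
  moreover have "0 \<le> exp 2 * c" using assms by simp
  ultimately show ?thesis using assms unfolding rel_entropy_def by linarith
qed

lemma rel_entropy_has_real_derivative:
  assumes "(f has_real_derivative f') (at t)" "f t > 0" "c > 0"
  shows "((\<lambda>t. rel_entropy (f t) c) has_real_derivative ln (f t / c) * f') (at t)"
proof -
  have "((\<lambda>t. f t * ln (f t / c) - f t + c) has_real_derivative
      f' * ln (f t / c) + f t * (f' / c / (f t / c)) - f' + 0) (at t)"
    using assms by (auto intro!: derivative_eq_intros)
  moreover have "f' * ln (f t / c) + f t * (f' / c / (f t / c)) - f' + 0 = ln (f t / c) * f'"
    using assms by (simp add: field_simps)
  ultimately show ?thesis by (simp add: rel_entropy_def mult.commute)
qed

definition entropy_lyapunov :: "real^'n^'n \<Rightarrow> real^'m \<Rightarrow> (real^'m)^'n \<Rightarrow> real" where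
  "entropy_lyapunov s0 xs Y = (\<Sum>j\<in>UNIV. \<Sum>i\<in>UNIV. s0$j$j * rel_entropy (Y$j$i) (xs$i))"

definition entropy_dissipation ::
  "((real^'m)^'n \<Rightarrow> (real^'m)^'n) \<Rightarrow> real^'n^'n \<Rightarrow> real^'m \<Rightarrow> (real^'m)^'n \<Rightarrow> real" where
  "entropy_dissipation G s0 xs Y = - (\<Sum>j\<in>UNIV. \<Sum>i\<in>UNIV. s0$j$j * ln (Y$j$i / xs$i) * G Y $ j $ i)"

lemma rel_entropy_le_entropy_lyapunov:
  assumes "Y \<in> pos_orthant" "\<forall>i. xs$i > 0" "positive_diagonal s0"
  shows "s0$j$j * rel_entropy (Y$j$i) (xs$i) \<le> entropy_lyapunov s0 xs Y"
proof -
  have nonneg: "0 \<le> s0$j$j * rel_entropy (Y$j$i) (xs$i)" for j i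
    using assms by (intro mult_nonneg_nonneg rel_entropy_nonneg)
      (auto simp: pos_orthant_def positive_diagonal_def less_imp_le)
  have "s0$j$j * rel_entropy (Y$j$i) (xs$i) \<le> (\<Sum>i\<in>UNIV. s0$j$j * rel_entropy (Y$j$i) (xs$i))"
    by (rule member_le_sum) (auto intro: nonneg)
  also have "\<dots> \<le> entropy_lyapunov s0 xs Y"
    unfolding entropy_lyapunov_def by (rule member_le_sum) (auto intro: nonneg sum_nonneg)
  finally show ?thesis .
qed

lemma entropy_lyapunov_nonneg:
  assumes "Y \<in> pos_orthant" "\<forall>i. xs$i > 0" "positive_diagonal s0"
  shows "0 \<le> entropy_lyapunov s0 xs Y"
  unfolding entropy_lyapunov_def using assms
  by (intro sum_nonneg mult_nonneg_nonneg rel_entropy_nonneg)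
    (auto simp: pos_orthant_def positive_diagonal_def less_imp_le)

lemma entropy_lyapunov_has_real_derivative:
  fixes X :: "real \<Rightarrow> (real^'m::finite)^'n::finite"
  assumes "(X has_vector_derivative G (X t)) (at t)" "X t \<in> pos_orthant" "\<forall>i. xs$i > 0"
  shows "((\<lambda>t. entropy_lyapunov s0 xs (X t)) has_real_derivative
           - entropy_dissipation G s0 xs (X t)) (at t)"
proof -
  have "((\<lambda>t. X t $ j $ i) has_real_derivative G (X t) $ j $ i) (at t)" for j i
    using bounded_linear.has_vector_derivative[OF bounded_linear_vec_nth[of i], of "\<lambda>t. X t $ j"]
      bounded_linear.has_vector_derivative[OF bounded_linear_vec_nth[of j] assms(1)]
    by (simp add: has_real_derivative_iff_has_vector_derivative)
  then have "((\<lambda>t. entropy_lyapunov s0 xs (X t)) has_real_derivative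
      (\<Sum>j\<in>UNIV. \<Sum>i\<in>UNIV. s0$j$j * (ln (X t $ j $ i / xs$i) * G (X t) $ j $ i))) (at t)"
    unfolding entropy_lyapunov_def using assms(2,3)
    by (intro DERIV_sum DERIV_cmult rel_entropy_has_real_derivative) (auto simp: pos_orthant_def)
  then show ?thesis by (simp add: entropy_dissipation_def mult.assoc)
qed

definition diffusion_dissipation ::
  "real^'n^'e \<Rightarrow> real^'e^'e \<Rightarrow> (real^'m)^'e \<Rightarrow> (real^'m)^'n \<Rightarrow> real" where
  "diffusion_dissipation d s1 R y =
     (\<Sum>e\<in>UNIV. \<Sum>i\<in>UNIV. s1$e$e * R$e$i * (\<Sum>j\<in>UNIV. d$e$j * ln (y$j$i)) * (\<Sum>k\<in>UNIV. d$e$k * y$k$i))"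

definition reaction_dissipation :: "real^'r^'c \<Rightarrow> real^'r \<Rightarrow> real^'c \<Rightarrow> real" where
  "reaction_dissipation B \<kappa> u = (\<Sum>k\<in>UNIV. \<kappa>$k * (transpose B *v u)$k * (transpose B *v vexp u)$k)"

lemma diffusion_pairing:
  fixes d :: "real^'n::finite^'e::finite" and R :: "(real^'m::finite)^'e"
  assumes s0: "positive_diagonal s0" and s1: "positive_diagonal s1"
  shows "(\<Sum>j\<in>UNIV. \<Sum>i\<in>UNIV. s0$j$j * L j i *
      kron_I (matrix_inv s0) (kron_I (transpose d) (kron_I s1 (diag_apply R (kron_I d y)))) $ j $ i)
   = (\<Sum>e\<in>UNIV. \<Sum>i\<in>UNIV. s1$e$e * R$e$i * (\<Sum>j\<in>UNIV. d$e$j * L j i) * (\<Sum>k\<in>UNIV. d$e$k * y$k$i))"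
proof -
  define T where "T e i j = s1$e$e * R$e$i * (\<Sum>k\<in>UNIV. d$e$k * y$k$i) * (d$e$j * L j i)" for e i j
  have "s0$j$j \<noteq> 0" for j using s0 by (simp add: positive_diagonal_def less_imp_neq[symmetric])
  then have cancel: "s0$j$j * L j i *
      kron_I (matrix_inv s0) (kron_I (transpose d) (kron_I s1 (diag_apply R (kron_I d y)))) $ j $ i
      = L j i * kron_I (transpose d) (kron_I s1 (diag_apply R (kron_I d y))) $ j $ i" for j i
    by (simp add: kron_I_matrix_inv_nth[OF s0])
  have expand: "L j i * kron_I (transpose d) (kron_I s1 (diag_apply R (kron_I d y))) $ j $ i
      = (\<Sum>e\<in>UNIV. T e i j)" for j i
    unfolding kron_I_nth[of "transpose d"] kron_I_positive_diagonal_nth[OF s1] diag_apply_def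
      vec_lambda_beta kron_I_nth[of d]
    by (simp add: transpose_def T_def sum_distrib_left mult_ac)
  have "(\<Sum>j\<in>UNIV. \<Sum>i\<in>UNIV. s0$j$j * L j i *
      kron_I (matrix_inv s0) (kron_I (transpose d) (kron_I s1 (diag_apply R (kron_I d y)))) $ j $ i)
    = (\<Sum>j\<in>UNIV. \<Sum>i\<in>UNIV. \<Sum>e\<in>UNIV. T e i j)"
    by (simp only: cancel expand)
  also have "\<dots> = (\<Sum>j\<in>UNIV. \<Sum>e\<in>UNIV. \<Sum>i\<in>UNIV. T e i j)"
    by (intro sum.cong refl) (rule sum.swap)
  also have "\<dots> = (\<Sum>e\<in>UNIV. \<Sum>j\<in>UNIV. \<Sum>i\<in>UNIV. T e i j)"
    by (rule sum.swap)
  also have "\<dots> = (\<Sum>e\<in>UNIV. \<Sum>i\<in>UNIV. \<Sum>j\<in>UNIV. T e i j)"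
    by (intro sum.cong refl) (rule sum.swap)
  finally show ?thesis by (simp add: T_def sum_distrib_left mult_ac)
qed

lemma inner_transpose_matrix_vector:
  fixes A :: "real^'n::finite^'m::finite"
  shows "inner (transpose A *v x) y = inner x (A *v y)"
  by (simp add: dot_lmul_matrix)

lemma reaction_field_pairing:
  "inner (vln (vdiv x xs)) (reaction_field Z B \<kappa> xs x)
     = - reaction_dissipation B \<kappa> (transpose Z *v vln (vdiv x xs))"
proof -
  let ?u = "transpose Z *v vln (vdiv x xs)"
  have "inner (vln (vdiv x xs)) (reaction_field Z B \<kappa> xs x)
      = - inner (transpose B *v ?u) (\<kappa> * (transpose B *v vexp ?u))"
    unfolding reaction_field_def inner_minus_right inner_transpose_matrix_vector diag_mat_mv ..
  then show ?thesis by (simp add: reaction_dissipation_def inner_vec_def mult_ac)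
qed

lemma entropy_dissipation_compartmental_rhs:
  assumes "positive_diagonal s0" "positive_diagonal s1"
  shows "entropy_dissipation (compartmental_rhs Z B \<kappa> xs d s0 s1 Rd) s0 xs X
    = diffusion_dissipation d s1 (Rd X) (block_div X xs)
      + (\<Sum>j\<in>UNIV. s0$j$j * reaction_dissipation B \<kappa> (transpose Z *v vln (vdiv (X$j) xs)))"
proof -
  have ln_eq: "ln (X$j$i / xs$i) = vln (vdiv (X$j) xs) $ i" for j i by (simp add: vln_def vdiv_def)
  have diffusion: "(\<Sum>j\<in>UNIV. \<Sum>i\<in>UNIV. s0$j$j * ln (X$j$i / xs$i) *
      kron_I (matrix_inv s0) (kron_I (transpose d) (kron_I s1 (diag_apply (Rd X) (kron_I d (block_div X xs))))) $ j $ i)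
    = diffusion_dissipation d s1 (Rd X) (block_div X xs)"
    unfolding diffusion_pairing[OF assms] diffusion_dissipation_def by (simp add: block_div_def vdiv_def)
  have reaction: "(\<Sum>i\<in>UNIV. s0$j$j * ln (X$j$i / xs$i) * reaction_field Z B \<kappa> xs (X$j) $ i)
    = - (s0$j$j * reaction_dissipation B \<kappa> (transpose Z *v vln (vdiv (X$j) xs)))" for j
    using arg_cong[OF reaction_field_pairing, of "(*) (s0$j$j)", of "X$j" xs Z B \<kappa>]
    by (simp add: inner_vec_def sum_distrib_left ln_eq mult.assoc del: transpose_matrix_vector)
  have "entropy_dissipation (compartmental_rhs Z B \<kappa> xs d s0 s1 Rd) s0 xs X
    = (\<Sum>j\<in>UNIV. \<Sum>i\<in>UNIV. s0$j$j * ln (X$j$i / xs$i) *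
      kron_I (matrix_inv s0) (kron_I (transpose d) (kron_I s1 (diag_apply (Rd X) (kron_I d (block_div X xs))))) $ j $ i)
    - (\<Sum>j\<in>UNIV. \<Sum>i\<in>UNIV. s0$j$j * ln (X$j$i / xs$i) * reaction_field Z B \<kappa> xs (X$j) $ i)"
    unfolding entropy_dissipation_def compartmental_rhs_def
    by (simp add: ring_distribs sum.distrib sum_negf sum_subtractf del: transpose_matrix_vector)
  then show ?thesis
    by (simp only: diffusion reaction sum_negf)
qed

lemma skeleton_edge_term:
  fixes d :: "real^'n::finite^'e::finite" and y :: "(real^'m::finite)^'n"
  assumes "u \<noteq> v" "\<forall>w. d$e$w = (if w = v then 1 else if w = u then -1 else 0)"
  shows "(\<Sum>j\<in>UNIV. d$e$j * ln (y$j$i)) * (\<Sum>k\<in>UNIV. d$e$k * y$k$i)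
           = (ln (y$v$i) - ln (y$u$i)) * (y$v$i - y$u$i)"
  using sum_signed_pair[of u v "\<lambda>w. d$e$w", OF assms, of "\<lambda>j. ln (y$j$i)"]
    sum_signed_pair[of u v "\<lambda>w. d$e$w", OF assms, of "\<lambda>k. y$k$i"]
  by simp

lemma diffusion_dissipation_terms:
  fixes d :: "real^'n::finite^'e::finite" and y :: "(real^'m::finite)^'n"
  assumes d: "is_connected_skeleton_d d" and s1: "positive_diagonal s1"
    and R: "\<forall>e i. R$e$i > 0" and y: "\<forall>j i. y$j$i > 0"
  defines "F e i \<equiv> s1$e$e * R$e$i * (\<Sum>j\<in>UNIV. d$e$j * ln (y$j$i)) * (\<Sum>k\<in>UNIV. d$e$k * y$k$i)"
  shows "0 \<le> F e i" and "F e i = 0 \<Longrightarrow> d$e$a \<noteq> 0 \<Longrightarrow> d$e$b \<noteq> 0 \<Longrightarrow> y$a$i = y$b$i"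
proof -
  obtain u v where uv: "u \<noteq> v" "\<forall>w. d$e$w = (if w = v then 1 else if w = u then -1 else 0)"
    using d unfolding is_connected_skeleton_d_def by blast
  have F: "F e i = s1$e$e * R$e$i * ((ln (y$v$i) - ln (y$u$i)) * (y$v$i - y$u$i))"
    unfolding F_def mult.assoc[of "s1$e$e * R$e$i"] skeleton_edge_term[OF uv] ..
  have pos: "0 < s1$e$e * R$e$i" using s1 R by (simp add: positive_diagonal_def)
  have mono: "0 \<le> (ln (y$v$i) - ln (y$u$i)) * (y$v$i - y$u$i)"
    by (rule strict_mono_on_diff_mult_nonneg[OF strict_mono_on_ln]) (use y in auto)
  show "0 \<le> F e i" unfolding F using pos mono by simp
  assume "F e i = 0" "d$e$a \<noteq> 0" "d$e$b \<noteq> 0"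
  then have "(ln (y$v$i) - ln (y$u$i)) * (y$v$i - y$u$i) = 0"
    using pos unfolding F by (metis mult_eq_0_iff less_irrefl)
  then have "y$v$i = y$u$i"
    using strict_mono_on_diff_mult_eq_0_iff[OF strict_mono_on_ln, of "y$v$i" "y$u$i"] y by simp
  moreover have "a = u \<or> a = v" "b = u \<or> b = v" using \<open>d$e$a \<noteq> 0\<close> \<open>d$e$b \<noteq> 0\<close> uv(2) by metis+
  ultimately show "y$a$i = y$b$i" by auto
qed

lemma diffusion_dissipation_nonneg:
  assumes "is_connected_skeleton_d d" "positive_diagonal s1" "\<forall>e i. R$e$i > 0" "\<forall>j i. y$j$i > 0"
  shows "0 \<le> diffusion_dissipation d s1 R y"
  unfolding diffusion_dissipation_def
  by (intro sum_nonneg diffusion_dissipation_terms(1)[OF assms])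

lemma diffusion_dissipation_eq_0_imp_uniform:
  fixes d :: "real^'n::finite^'e::finite" and y :: "(real^'m::finite)^'n"
  assumes "is_connected_skeleton_d d" "positive_diagonal s1" "\<forall>e i. R$e$i > 0" "\<forall>j i. y$j$i > 0"
    and zero: "diffusion_dissipation d s1 R y = 0"
  shows "y$a = y$b"
proof -
  note terms = diffusion_dissipation_terms[OF assms(1-4)]
  have F0: "\<forall>e\<in>UNIV. \<forall>i\<in>UNIV. s1$e$e * R$e$i * (\<Sum>j\<in>UNIV. d$e$j * ln (y$j$i)) * (\<Sum>k\<in>UNIV. d$e$k * y$k$i) = 0"
    using zero unfolding diffusion_dissipation_def
    by (simp add: sum_nonneg_eq_0_iff sum_nonneg terms(1))
  have adjacent: "y$a' = y$b'" if "d$e$a' \<noteq> 0" "d$e$b' \<noteq> 0" for e a' b'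
  proof -
    have "y$a'$i = y$b'$i" for i
      using terms(2)[OF F0[rule_format, OF UNIV_I UNIV_I] that] .
    then show ?thesis by (simp add: vec_eq_iff)
  qed
  have "(\<lambda>a b. \<exists>e. d$e$a \<noteq> 0 \<and> d$e$b \<noteq> 0)\<^sup>*\<^sup>* a b"
    using assms(1) unfolding is_connected_skeleton_d_def by blast
  then show ?thesis
    by (induction rule: rtranclp_induct) (auto dest: adjacent)
qed

lemma incidence_matrix_transpose_nth:
  assumes "is_incidence_matrix B"
  obtains a b where "a \<noteq> b" "\<And>w. (transpose B *v w)$k = w$b - w$a"
proof -
  obtain a b where ab: "a \<noteq> b" "\<forall>\<rho>. B$\<rho>$k = (if \<rho> = b then 1 else if \<rho> = a then -1 else 0)"
    using assms unfolding is_incidence_matrix_def by blast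
  have "(transpose B *v w)$k = w$b - w$a" for w
    using sum_signed_pair[OF ab, of "\<lambda>\<rho>. w$\<rho>"]
    by (simp add: matrix_vector_mult_def transpose_def)
  with ab(1) show ?thesis using that by blast
qed

text \<open>The library simp rule transpose_matrix_vector rewrites transpose A *v x to x v* A; it is
  disabled below wherever a fact is stated in terms of transpose.\<close>

lemma reaction_dissipation_term:
  assumes "is_incidence_matrix B"
  shows "0 \<le> (transpose B *v u)$k * (transpose B *v vexp u)$k"
    and "(transpose B *v u)$k * (transpose B *v vexp u)$k = 0 \<longleftrightarrow> (transpose B *v u)$k = 0"
proof -
  obtain a b where ab: "\<And>w. (transpose B *v w)$k = w$b - w$a"
    using incidence_matrix_transpose_nth[OF assms] by blast
  have u: "(transpose B *v u)$k = u$b - u$a" by (rule ab)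
  have exp_u: "(transpose B *v vexp u)$k = exp (u$b) - exp (u$a)"
    unfolding ab by (simp add: vexp_def)
  show "0 \<le> (transpose B *v u)$k * (transpose B *v vexp u)$k"
    unfolding u exp_u using strict_mono_on_diff_mult_nonneg[OF strict_mono_exp, of "u$b" "u$a"]
    by (simp add: mult.commute)
  show "(transpose B *v u)$k * (transpose B *v vexp u)$k = 0 \<longleftrightarrow> (transpose B *v u)$k = 0"
    unfolding u exp_u using strict_mono_on_diff_mult_eq_0_iff[OF strict_mono_exp, of "u$b" "u$a"]
    by (simp add: mult.commute)
qed

lemma reaction_dissipation_nonneg:
  assumes "is_incidence_matrix B" "\<forall>k. \<kappa>$k \<ge> 0"
  shows "0 \<le> reaction_dissipation B \<kappa> u"
proof -
  have "0 \<le> \<kappa>$k * ((transpose B *v u)$k * (transpose B *v vexp u)$k)" for k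
    using assms(2) reaction_dissipation_term(1)[OF assms(1), of u k]
    by (simp add: mult_nonneg_nonneg del: transpose_matrix_vector)
  then show ?thesis unfolding reaction_dissipation_def mult.assoc by (intro sum_nonneg)
qed

lemma reaction_dissipation_eq_0_iff:
  assumes "is_incidence_matrix B" "\<forall>k. \<kappa>$k > 0"
  shows "reaction_dissipation B \<kappa> u = 0 \<longleftrightarrow> transpose B *v u = 0"
proof -
  have nonneg: "0 \<le> \<kappa>$k * ((transpose B *v u)$k * (transpose B *v vexp u)$k)" for k
    using assms(2) reaction_dissipation_term(1)[OF assms(1), of u k]
    by (simp add: mult_nonneg_nonneg less_imp_le del: transpose_matrix_vector)
  have "reaction_dissipation B \<kappa> u = 0 \<longleftrightarrow> (\<forall>k. \<kappa>$k * ((transpose B *v u)$k * (transpose B *v vexp u)$k) = 0)"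
    unfolding reaction_dissipation_def mult.assoc
    by (simp add: sum_nonneg_eq_0_iff nonneg del: transpose_matrix_vector)
  also have "\<dots> \<longleftrightarrow> transpose B *v u = 0"
    using assms(2) reaction_dissipation_term(2)[OF assms(1), of u]
    by (simp add: vec_eq_iff less_imp_neq[symmetric] del: transpose_matrix_vector)
  finally show ?thesis .
qed

section \<open>A LaSalle-type convergence lemma\<close>

lemma norm_diff_le_of_vector_derivative_bound:
  fixes X :: "real \<Rightarrow> 'a::real_normed_vector"
  assumes "a \<le> b"
    and "\<And>t. t \<in> {a..b} \<Longrightarrow> (X has_vector_derivative X' t) (at t within {a..b})"
    and "\<And>t. t \<in> {a..b} \<Longrightarrow> norm (X' t) \<le> L"
  shows "norm (X b - X a) \<le> L * (b - a)"
proof -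
  have "norm (X b - X a) \<le> L * norm (b - a)"
  proof (rule differentiable_bound[of "{a..b}" X "\<lambda>t h. h *\<^sub>R X' t"])
    show "(X has_derivative (\<lambda>h. h *\<^sub>R X' t)) (at t within {a..b})" if "t \<in> {a..b}" for t
      using assms(2)[OF that] by (simp add: has_vector_derivative_def)
    show "onorm (\<lambda>h. h *\<^sub>R X' t) \<le> L" if "t \<in> {a..b}" for t
      using assms(3)[OF that] onorm_scaleR_left[OF bounded_linear_ident, of "X' t"] by (simp add: onorm_id)
  qed (use assms(1) in auto)
  then show ?thesis using assms(1) by simp
qed

lemma compact_bounded_below_off_zeros:
  fixes W :: "'a::metric_space \<Rightarrow> real"
  assumes "compact K" "continuous_on K W" "\<And>Y. Y \<in> K \<Longrightarrow> 0 \<le> W Y"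
    and "\<And>Y. Y \<in> K \<Longrightarrow> W Y = 0 \<Longrightarrow> Y \<in> T" and "r > 0"
  obtains c where "c > 0" "\<And>Y. Y \<in> K \<Longrightarrow> r \<le> infdist Y T \<Longrightarrow> c \<le> W Y"
proof -
  define C where "C = K \<inter> {Y. r \<le> infdist Y T}"
  have "compact C" unfolding C_def
    by (intro compact_Int_closed assms(1) closed_Collect_le continuous_intros continuous_on_infdist)
  show ?thesis
  proof (cases "C = {}")
    case True
    then show ?thesis using that[of 1] by (auto simp: C_def)
  next
    case False
    obtain Y0 where Y0: "Y0 \<in> C" "\<And>Y. Y \<in> C \<Longrightarrow> W Y0 \<le> W Y"
      using continuous_attains_inf[OF \<open>compact C\<close> False continuous_on_subset[OF assms(2)]]
      unfolding C_def by blast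
    have "Y0 \<notin> T" using Y0(1) assms(5) infdist_zero[of Y0 T] by (auto simp: C_def)
    then have "0 < W Y0" using Y0(1) assms(3,4) by (force simp: C_def)
    then show ?thesis using that[of "W Y0"] Y0(2) by (auto simp: C_def)
  qed
qed

lemma lasalle_infdist_tendsto_0:
  fixes X :: "real \<Rightarrow> 'a::real_normed_vector" and V W :: "'a \<Rightarrow> real"
  assumes K: "compact K" and in_K: "\<And>t. t \<ge> t\<^sub>0 \<Longrightarrow> X t \<in> K"
    and X_deriv: "\<And>t. t \<ge> t\<^sub>0 \<Longrightarrow> (X has_vector_derivative G (X t)) (at t)"
    and G_cont: "continuous_on K G"
    and W_cont: "continuous_on K W" and W_nonneg: "\<And>Y. Y \<in> K \<Longrightarrow> 0 \<le> W Y"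
    and W_zero: "\<And>Y. Y \<in> K \<Longrightarrow> W Y = 0 \<Longrightarrow> Y \<in> T"
    and V_deriv: "\<And>t. t \<ge> t\<^sub>0 \<Longrightarrow> ((\<lambda>t. V (X t)) has_real_derivative - W (X t)) (at t)"
    and V_nonneg: "\<And>t. t \<ge> t\<^sub>0 \<Longrightarrow> 0 \<le> V (X t)"
  shows "((\<lambda>t. infdist (X t) T) \<longlongrightarrow> 0) at_top"
proof (rule ccontr)
  assume "\<not> ((\<lambda>t. infdist (X t) T) \<longlongrightarrow> 0) at_top"
  then obtain \<epsilon> where "\<epsilon> > 0" and not_eventually: "\<not> eventually (\<lambda>t. dist (infdist (X t) T) 0 < \<epsilon>) at_top"
    unfolding tendsto_iff by blast
  have far_again: "\<exists>t\<ge>S. \<epsilon> \<le> infdist (X t) T" for S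
  proof -
    obtain t where "t \<ge> S" "\<not> dist (infdist (X t) T) 0 < \<epsilon>"
      using not_eventually unfolding eventually_at_top_linorder by blast
    then show ?thesis using infdist_nonneg[of "X t" T] by (auto simp: dist_real_def)
  qed
  obtain L where L: "L > 0" "\<And>Y. Y \<in> K \<Longrightarrow> norm (G Y) \<le> L"
    using compact_imp_bounded[OF compact_continuous_image[OF G_cont K]] unfolding bounded_pos by blast
  have "\<epsilon> / 2 > 0" using \<open>\<epsilon> > 0\<close> by simp
  then obtain c where c: "c > 0" "\<And>Y. Y \<in> K \<Longrightarrow> \<epsilon> / 2 \<le> infdist Y T \<Longrightarrow> c \<le> W Y"
    using compact_bounded_below_off_zeros[OF K W_cont W_nonneg W_zero] by blast
  have lipschitz: "dist (X s) (X t) \<le> L * (t - s)" if "t\<^sub>0 \<le> s" "s \<le> t" for s t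
  proof -
    have "norm (X t - X s) \<le> L * (t - s)"
    proof (rule norm_diff_le_of_vector_derivative_bound[OF \<open>s \<le> t\<close>])
      show "(X has_vector_derivative G (X r)) (at r within {s..t})" if "r \<in> {s..t}" for r
        using X_deriv[of r] that \<open>t\<^sub>0 \<le> s\<close> by (simp add: has_vector_derivative_at_within)
      show "norm (G (X r)) \<le> L" if "r \<in> {s..t}" for r
        using L(2)[OF in_K[of r]] that \<open>t\<^sub>0 \<le> s\<close> by simp
    qed
    then show ?thesis by (simp add: dist_norm norm_minus_commute)
  qed
  have decrease: "V (X t) \<le> V (X s) - w * (t - s)"
    if "t\<^sub>0 \<le> s" "s \<le> t" "\<And>r. s \<le> r \<Longrightarrow> r \<le> t \<Longrightarrow> w \<le> W (X r)" for s t w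
  proof -
    have "V (X t) + w * t \<le> V (X s) + w * s"
    proof (rule DERIV_nonpos_imp_nonincreasing[OF \<open>s \<le> t\<close>])
      fix r assume "s \<le> r" "r \<le> t"
      then show "\<exists>y. ((\<lambda>t. V (X t) + w * t) has_real_derivative y) (at r) \<and> y \<le> 0"
        using that V_deriv[of r] by (auto intro!: exI derivative_eq_intros)
    qed
    then show ?thesis by (simp add: algebra_simps)
  qed
  txt \<open>Within time h of leaving the \<epsilon>-neighbourhood of T the solution stays outside the
    \<epsilon>/2-neighbourhood, where W \<ge> c, so each excursion costs at least c h of V.\<close>
  define h where "h = \<epsilon> / (2 * L)"
  have "h > 0" using \<open>\<epsilon> > 0\<close> L(1) by (simp add: h_def)
  have excursion: "V (X (s + h)) \<le> V (X s) - c * h" if "t\<^sub>0 \<le> s" "\<epsilon> \<le> infdist (X s) T" for s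
  proof (rule order_trans[OF decrease])
    fix r assume r: "s \<le> r" "r \<le> s + h"
    have "\<epsilon> \<le> infdist (X r) T + L * (r - s)"
      using that infdist_triangle[of "X s" T "X r"] lipschitz[of s r] r by linarith
    moreover have "L * (r - s) \<le> \<epsilon> / 2"
      using r L(1) mult_left_mono[of "r - s" h L] by (simp add: h_def)
    ultimately show "c \<le> W (X r)" using c(2) in_K that(1) r by simp
  qed (use that \<open>h > 0\<close> in auto)
  have descent: "\<exists>t\<ge>t\<^sub>0. V (X t) \<le> V (X t\<^sub>0) - real k * (c * h)" for k
  proof (induction k)
    case (Suc k)
    then obtain t where t: "t \<ge> t\<^sub>0" "V (X t) \<le> V (X t\<^sub>0) - real k * (c * h)" by blast
    obtain s where s: "s \<ge> t" "\<epsilon> \<le> infdist (X s) T" using far_again by blast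
    have "V (X s) \<le> V (X t)" using decrease[of t s 0] t s W_nonneg in_K by simp
    then have "V (X (s + h)) \<le> V (X t\<^sub>0) - real (Suc k) * (c * h)"
      using excursion[of s] s t by (simp add: algebra_simps)
    then show ?case using s t \<open>h > 0\<close> by (intro exI[of _ "s + h"]) auto
  qed auto
  obtain k :: nat where "V (X t\<^sub>0) < real k * (c * h)"
    using ex_less_of_nat_mult[of "c * h" "V (X t\<^sub>0)"] c(1) \<open>h > 0\<close> by auto
  moreover obtain t where "t \<ge> t\<^sub>0" "V (X t) \<le> V (X t\<^sub>0) - real k * (c * h)"
    using descent by blast
  ultimately show False using V_nonneg[of t] by linarith
qed

section \<open>The compartmental model\<close>

lemma norm_le_l1_nested_cart: "norm (Y :: (real^'m::finite)^'n::finite) \<le> (\<Sum>j\<in>UNIV. \<Sum>i\<in>UNIV. \<bar>Y$j$i\<bar>)"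
proof -
  have "norm Y \<le> (\<Sum>j\<in>UNIV. norm (Y$j))"
    unfolding norm_vec_def by (rule L2_set_le_sum) auto
  also have "\<dots> \<le> (\<Sum>j\<in>UNIV. \<Sum>i\<in>UNIV. \<bar>Y$j$i\<bar>)"
    by (intro sum_mono norm_le_l1_cart)
  finally show ?thesis .
qed

lemma persistent_bounded_eventually_in_compact:
  fixes X :: "real \<Rightarrow> (real^'m::finite)^'n::finite"
  assumes persistent: "\<forall>j i. Liminf at_top (\<lambda>t. ereal (X t $ j $ i)) > 0"
    and bounded: "\<And>t j i. t \<ge> t\<^sub>1 \<Longrightarrow> X t $ j $ i \<le> M j i"
  obtains K t\<^sub>0 where "compact K" "K \<subseteq> pos_orthant" "\<And>t. t \<ge> t\<^sub>0 \<Longrightarrow> X t \<in> K"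
proof -
  have "\<exists>\<delta>>0. eventually (\<lambda>t. \<delta> < X t $ j $ i) at_top" for j i
  proof -
    obtain z where z: "0 < ereal z" "ereal z < Liminf at_top (\<lambda>t. ereal (X t $ j $ i))"
      using persistent ereal_dense2 by blast
    have "eventually (\<lambda>t. ereal z < ereal (X t $ j $ i)) at_top"
      using z(2) by (rule less_LiminfD)
    then show ?thesis using z(1) by (intro exI[of _ z]) auto
  qed
  then obtain \<delta> where \<delta>: "\<And>j i. \<delta> j i > 0" "\<And>j i. eventually (\<lambda>t. \<delta> j i < X t $ j $ i) at_top"
    by metis
  have "eventually (\<lambda>t. \<forall>j i. \<delta> j i < X t $ j $ i) at_top"
    by (intro eventually_all_finite \<delta>(2))
  then obtain t\<^sub>0 where t\<^sub>0: "\<And>t j i. t \<ge> t\<^sub>0 \<Longrightarrow> \<delta> j i < X t $ j $ i"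
    by (auto simp: eventually_at_top_linorder)
  define K where "K = {Y::(real^'m)^'n. \<forall>j i. \<delta> j i \<le> Y$j$i \<and> Y$j$i \<le> M j i}"
  have "K \<subseteq> pos_orthant"
  proof
    fix Y assume "Y \<in> K"
    then have "\<delta> j i \<le> Y$j$i" for j i by (simp add: K_def)
    then show "Y \<in> pos_orthant" unfolding pos_orthant_def using \<delta>(1) less_le_trans by blast
  qed
  moreover have "compact K"
  proof -
    have "norm Y \<le> (\<Sum>j\<in>UNIV. \<Sum>i\<in>UNIV. \<bar>M j i\<bar>)" if "Y \<in> K" for Y
    proof -
      have "\<bar>Y$j$i\<bar> \<le> \<bar>M j i\<bar>" for j i
      proof -
        have "\<delta> j i \<le> Y$j$i" "Y$j$i \<le> M j i" using that by (simp_all add: K_def)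
        moreover from this(1) have "0 < Y$j$i" by (rule less_le_trans[OF \<delta>(1)])
        ultimately show ?thesis by simp
      qed
      then have "(\<Sum>j\<in>UNIV. \<Sum>i\<in>UNIV. \<bar>Y$j$i\<bar>) \<le> (\<Sum>j\<in>UNIV. \<Sum>i\<in>UNIV. \<bar>M j i\<bar>)"
        by (intro sum_mono)
      then show ?thesis using norm_le_l1_nested_cart[of Y] by linarith
    qed
    then have "bounded K" unfolding bounded_iff by blast
    moreover have "closed K"
      unfolding K_def by (intro closed_Collect_all closed_Collect_conj closed_Collect_le continuous_intros)
    ultimately show ?thesis by (simp add: compact_eq_bounded_closed)
  qed
  moreover have "X t \<in> K" if "t \<ge> max t\<^sub>0 t\<^sub>1" for t
    using t\<^sub>0[of t] bounded[of t] that by (simp add: K_def less_imp_le)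
  ultimately show ?thesis using that by blast
qed

lemma vln_vdiv:
  assumes "\<forall>i. x$i > 0" "\<forall>i. y$i > 0"
  shows "vln (vdiv x y) = vln x - vln y"
proof -
  have "ln (x$i / y$i) = ln (x$i) - ln (y$i)" for i by (rule ln_divide_pos) (use assms in auto)
  then show ?thesis by (simp add: vec_eq_iff vln_def vdiv_def)
qed

lemma continuous_on_compartmental_rhs:
  assumes "continuous_on pos_orthant Rd" "\<forall>i. xs$i > 0"
  shows "continuous_on pos_orthant (compartmental_rhs Z B \<kappa> xs d s0 s1 Rd)"
  unfolding compartmental_rhs_def reaction_field_def kron_I_def diag_apply_def block_div_def vdiv_def
    vexp_def vln_def matrix_vector_mult_def using assms
  by (intro continuous_intros continuous_on_vec_lambda)
    (auto simp: pos_orthant_def less_imp_neq[symmetric])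

lemma is_solution_has_vector_derivative_at:
  assumes "is_solution G X" "t > 0"
  shows "(X has_vector_derivative G (X t)) (at t)"
proof -
  have "at t within {0..} = at t"
    using assms(2) by (intro at_within_interior) (simp add: interior_real_atLeast)
  moreover have "(X has_vector_derivative G (X t)) (at t within {0..})"
    using assms by (simp add: is_solution_def)
  ultimately show ?thesis by simp
qed

locale balanced_compartmental_network =
  fixes Z :: "real^'c::finite^'m::finite"
    and B :: "real^'r::finite^'c"
    and \<kappa> :: "real^'r"
    and xs :: "real^'m"
    and d :: "real^'n::finite^'e::finite"
    and s0 :: "real^'n^'n"
    and s1 :: "real^'e^'e"
    and Rd :: "(real^'m)^'n \<Rightarrow> (real^'m)^'e"
  assumes B_inc: "is_incidence_matrix B"
    and xs_pos: "\<forall>i. xs$i > 0"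
    and \<kappa>_pos: "\<forall>j. \<kappa>$j > 0"
    and d_inc: "is_connected_skeleton_d d"
    and s0_pos: "positive_diagonal s0"
    and s1_pos: "positive_diagonal s1"
    and Rd_pos: "\<forall>X\<in>pos_orthant. \<forall>e i. Rd X $ e $ i > 0"
    and Rd_cont: "continuous_on pos_orthant Rd"
begin

abbreviation rhs :: "(real^'m)^'n \<Rightarrow> (real^'m)^'n" where
  "rhs \<equiv> compartmental_rhs Z B \<kappa> xs d s0 s1 Rd"

definition equilibria :: "(real^'m) set" where
  "equilibria = {x. (\<forall>i. x$i > 0) \<and> transpose (Z ** B) *v vln x = transpose (Z ** B) *v vln xs}"

definition uniform_equilibria :: "((real^'m)^'n) set" where
  "uniform_equilibria = {Y. \<exists>x\<in>equilibria. \<forall>j. Y$j = x}"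

lemma weighted_reaction_dissipation_nonneg: "0 \<le> s0$j$j * reaction_dissipation B \<kappa> u"
  using s0_pos \<kappa>_pos
  by (intro mult_nonneg_nonneg reaction_dissipation_nonneg B_inc) (auto simp: positive_diagonal_def less_imp_le)

lemma entropy_dissipation_split:
  assumes "Y \<in> pos_orthant"
  shows "0 \<le> diffusion_dissipation d s1 (Rd Y) (block_div Y xs)"
    and "0 \<le> (\<Sum>j\<in>UNIV. s0$j$j * reaction_dissipation B \<kappa> (transpose Z *v vln (vdiv (Y$j) xs)))"
    and "entropy_dissipation rhs s0 xs Y = diffusion_dissipation d s1 (Rd Y) (block_div Y xs)
      + (\<Sum>j\<in>UNIV. s0$j$j * reaction_dissipation B \<kappa> (transpose Z *v vln (vdiv (Y$j) xs)))"
proof -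
  show "0 \<le> diffusion_dissipation d s1 (Rd Y) (block_div Y xs)"
    using assms xs_pos Rd_pos
    by (intro diffusion_dissipation_nonneg d_inc s1_pos) (auto simp: pos_orthant_def block_div_def vdiv_def)
  show "0 \<le> (\<Sum>j\<in>UNIV. s0$j$j * reaction_dissipation B \<kappa> (transpose Z *v vln (vdiv (Y$j) xs)))"
    by (intro sum_nonneg weighted_reaction_dissipation_nonneg)
qed (rule entropy_dissipation_compartmental_rhs[OF s0_pos s1_pos])

lemma entropy_dissipation_nonneg: "Y \<in> pos_orthant \<Longrightarrow> 0 \<le> entropy_dissipation rhs s0 xs Y"
  using entropy_dissipation_split by simp

lemma entropy_dissipation_eq_0_imp_uniform_equilibrium:
  assumes Y: "Y \<in> pos_orthant" and zero: "entropy_dissipation rhs s0 xs Y = 0"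
  shows "Y \<in> uniform_equilibria"
proof -
  note split = entropy_dissipation_split[OF Y]
  have Y_pos: "\<forall>i. Y$j$i > 0" for j using Y by (simp add: pos_orthant_def)
  have y_pos: "\<forall>j i. block_div Y xs $ j $ i > 0"
    using Y xs_pos by (simp add: pos_orthant_def block_div_def vdiv_def)
  have "diffusion_dissipation d s1 (Rd Y) (block_div Y xs) = 0"
    using split zero by linarith
  then have block_eq: "block_div Y xs $ a = block_div Y xs $ b" for a b
    using diffusion_dissipation_eq_0_imp_uniform[OF d_inc s1_pos _ y_pos] Rd_pos Y by blast
  have "Y$a$i / xs$i = Y$b$i / xs$i" for a b i
    using arg_cong[OF block_eq[of a b], of "\<lambda>z. z $ i"] by (simp only: block_div_nth)
  then have uniform: "Y$j = Y$a" for j a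
    using xs_pos by (simp add: vec_eq_iff less_imp_neq[symmetric])
  have "(\<Sum>j\<in>UNIV. s0$j$j * reaction_dissipation B \<kappa> (transpose Z *v vln (vdiv (Y$j) xs))) = 0"
    using split zero by simp
  then have "s0$j$j * reaction_dissipation B \<kappa> (transpose Z *v vln (vdiv (Y$j) xs)) = 0" for j
    using sum_nonneg_eq_0_iff[of UNIV "\<lambda>j. s0$j$j * reaction_dissipation B \<kappa> (transpose Z *v vln (vdiv (Y$j) xs))"]
      weighted_reaction_dissipation_nonneg by simp
  then have "transpose B *v (transpose Z *v vln (vdiv (Y$j) xs)) = 0" for j
    using s0_pos reaction_dissipation_eq_0_iff[OF B_inc \<kappa>_pos]
    by (simp add: positive_diagonal_def less_imp_neq[symmetric])
  then have "transpose (Z ** B) *v vln (Y$j) = transpose (Z ** B) *v vln xs" for j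
    by (simp add: vln_vdiv[OF Y_pos xs_pos] matrix_transpose_mul matrix_vector_mul_assoc[symmetric]
        matrix_vector_mult_diff_distrib)
  then have "Y$a \<in> equilibria" for a
    using Y_pos by (simp add: equilibria_def)
  then show ?thesis
    unfolding uniform_equilibria_def using uniform by blast
qed

lemma continuous_on_entropy_dissipation: "continuous_on pos_orthant (entropy_dissipation rhs s0 xs)"
  unfolding entropy_dissipation_def using xs_pos
  by (intro continuous_intros continuous_on_compartmental_rhs Rd_cont)
    (auto simp: pos_orthant_def less_imp_neq[symmetric])

lemma entropy_lyapunov_antitone:
  assumes X: "is_solution rhs X" and "0 < s" "s \<le> t"
  shows "entropy_lyapunov s0 xs (X t) \<le> entropy_lyapunov s0 xs (X s)"
proof (rule DERIV_nonpos_imp_nonincreasing[OF \<open>s \<le> t\<close>])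
  fix r assume "s \<le> r" "r \<le> t"
  then have r: "0 < r" using assms(2) by linarith
  then have "X r \<in> pos_orthant" using X by (simp add: is_solution_def)
  then have "((\<lambda>t. entropy_lyapunov s0 xs (X t)) has_real_derivative
      - entropy_dissipation rhs s0 xs (X r)) (at r)"
    by (intro entropy_lyapunov_has_real_derivative is_solution_has_vector_derivative_at[OF X r] xs_pos)
  moreover have "0 \<le> entropy_dissipation rhs s0 xs (X r)"
    by (rule entropy_dissipation_nonneg) fact
  ultimately show "\<exists>y. ((\<lambda>t. entropy_lyapunov s0 xs (X t)) has_real_derivative y) (at r) \<and> y \<le> 0"
    by auto
qed

lemma solution_component_bound:
  assumes X: "is_solution rhs X" and "1 \<le> t"
  shows "X t $ j $ i \<le> exp 2 * xs$i + entropy_lyapunov s0 xs (X 1) / s0$j$j"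
proof -
  have pos: "X t \<in> pos_orthant" using X assms(2) by (simp add: is_solution_def)
  then have X_pos: "0 < X t $ j $ i" by (simp add: pos_orthant_def)
  have s0_jj: "0 < s0$j$j" using s0_pos by (simp add: positive_diagonal_def)
  have "entropy_lyapunov s0 xs (X t) \<le> entropy_lyapunov s0 xs (X 1)"
    by (rule entropy_lyapunov_antitone[OF X _ assms(2)]) simp
  with rel_entropy_le_entropy_lyapunov[OF pos xs_pos s0_pos]
  have "s0$j$j * rel_entropy (X t $ j $ i) (xs$i) \<le> entropy_lyapunov s0 xs (X 1)"
    by (rule order_trans)
  then have "rel_entropy (X t $ j $ i) (xs$i) \<le> entropy_lyapunov s0 xs (X 1) / s0$j$j"
    using s0_jj by (simp add: le_divide_eq mult.commute)
  moreover have "X t $ j $ i \<le> exp 2 * xs$i + rel_entropy (X t $ j $ i) (xs$i)"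
    using X_pos xs_pos by (simp add: le_rel_entropy)
  ultimately show ?thesis by linarith
qed

lemma persistent_solution_tendsto_uniform_equilibria:
  assumes X: "is_solution rhs X"
    and persistent: "\<forall>j i. Liminf at_top (\<lambda>t. ereal (X t $ j $ i)) > 0"
  shows "((\<lambda>t. infdist (X t) uniform_equilibria) \<longlongrightarrow> 0) at_top"
proof -
  obtain K t\<^sub>0 where K: "compact K" "K \<subseteq> pos_orthant" and in_K: "\<And>t. t \<ge> t\<^sub>0 \<Longrightarrow> X t \<in> K"
    using persistent_bounded_eventually_in_compact[OF persistent solution_component_bound[OF X]] by blast
  define t\<^sub>1 where "t\<^sub>1 = max t\<^sub>0 1"
  show ?thesis
  proof (rule lasalle_infdist_tendsto_0[OF K(1), where t\<^sub>0 = t\<^sub>1 and G = rhs and W = "entropy_dissipation rhs s0 xs"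
        and V = "entropy_lyapunov s0 xs"])
    fix t assume "t\<^sub>1 \<le> t"
    then have t: "0 < t" "t\<^sub>0 \<le> t" by (auto simp: t\<^sub>1_def)
    then have pos: "X t \<in> pos_orthant" using X by (simp add: is_solution_def)
    show "X t \<in> K" using in_K t(2) .
    show deriv: "(X has_vector_derivative rhs (X t)) (at t)"
      by (rule is_solution_has_vector_derivative_at[OF X t(1)])
    show "((\<lambda>t. entropy_lyapunov s0 xs (X t)) has_real_derivative
        - entropy_dissipation rhs s0 xs (X t)) (at t)"
      by (intro entropy_lyapunov_has_real_derivative deriv pos xs_pos)
    show "0 \<le> entropy_lyapunov s0 xs (X t)"
      by (rule entropy_lyapunov_nonneg[OF pos xs_pos s0_pos])
  next
    show "continuous_on K rhs"
      by (rule continuous_on_subset[OF continuous_on_compartmental_rhs[OF Rd_cont xs_pos] K(2)])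
    show "continuous_on K (entropy_dissipation rhs s0 xs)"
      by (rule continuous_on_subset[OF continuous_on_entropy_dissipation K(2)])
  qed (use K(2) entropy_dissipation_nonneg entropy_dissipation_eq_0_imp_uniform_equilibrium in auto)
qed

end

theorem theorem8:
  fixes Z :: "real^'c::finite^'m::finite"
    and B :: "real^'r::finite^'c"
    and \<kappa> :: "real^'r"
    and xs :: "real^'m"
    and d :: "real^'n::finite^'e::finite"
    and s0 :: "real^'n^'n"
    and s1 :: "real^'e^'e"
    and Rd :: "(real^'m)^'n \<Rightarrow> (real^'m)^'e"
    and \<alpha> :: real
  assumes Z_nat: "\<forall>i \<rho>. Z$i$\<rho> \<in> \<nat>"
    and B_inc: "is_incidence_matrix B"
    and xs_pos: "\<forall>i. xs$i > 0"
    and \<kappa>_pos: "\<forall>j. \<kappa>$j > 0"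
    and d_inc: "is_connected_skeleton_d d"
    and s0_pos: "positive_diagonal s0"
    and s1_pos: "positive_diagonal s1"
    and \<alpha>_pos: "\<alpha> > 0"
    and Rd_lb: "\<forall>X\<in>pos_orthant. \<forall>e i. (Rd X)$e$i \<ge> \<alpha>"
    and Rd_C1: "\<exists>Rd'. (\<forall>X\<in>pos_orthant. (Rd has_derivative blinfun_apply (Rd' X)) (at X))
                     \<and> continuous_on pos_orthant Rd'"
    and persistent: "\<forall>Y. is_solution (compartmental_rhs Z B \<kappa> xs d s0 s1 Rd) Y \<longrightarrow>
                        (\<forall>j i. Liminf at_top (\<lambda>t. ereal (Y t $ j $ i)) > 0)"
  shows "\<forall>X. is_solution (compartmental_rhs Z B \<kappa> xs d s0 s1 Rd) X \<longrightarrow>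
           ((\<lambda>t. infdist (X t)
              {Y. \<exists>x\<in>{x. (\<forall>i. x$i > 0) \<and>
                         transpose (Z ** B) *v vln x = transpose (Z ** B) *v vln xs}.
                    \<forall>j. Y$j = x}) \<longlongrightarrow> 0) at_top"
proof -
  obtain Rd' where "\<forall>X\<in>pos_orthant. (Rd has_derivative blinfun_apply (Rd' X)) (at X)"
    using Rd_C1 by blast
  then have "continuous_on pos_orthant Rd"
    by (intro continuous_at_imp_continuous_on) (auto intro: has_derivative_continuous)
  moreover have "\<forall>X\<in>pos_orthant. \<forall>e i. Rd X $ e $ i > 0"
    using Rd_lb \<alpha>_pos by (blast intro: less_le_trans)
  ultimately interpret balanced_compartmental_network Z B \<kappa> xs d s0 s1 Rd
    using B_inc xs_pos \<kappa>_pos d_inc s0_pos s1_pos by unfold_locales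
  show ?thesis
    using persistent persistent_solution_tendsto_uniform_equilibria
    unfolding uniform_equilibria_def equilibria_def by blast
qed

end
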